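(* Assume either that $g$ satisfies A1–A4 (and $\mathfrak{D}\subset\mathbb{R}^{m\times d}$ is arbitrary), or that $(g,\mathfrak{D})$ satisfy B1–B4. Then for every $X\in\mathbb{R}^{m\times n}$ and all $D,D'\in\mathfrak{D}$, $$|F_X(D)-F_X(D')|\le L_X(\bar g)\,\|D-D'\|_{1\to2}.$$
   Context: A penalty is a function $g:\mathbb{R}^d\to\mathbb{R}\cup\{+\infty\}$. $\mathcal{L}_x(D,\alpha)=\tfrac12\|x-D\alpha\|_2^2+g(\alpha)$, $f_x(D)=\inf_\alpha\mathcal{L}_x(D,\alpha)$, $F_X(D)=\frac1n\sum_i f_{x_i}(D)$ for $X=[x_1,\dots,x_n]$. $\|\Delta\|_{1\to2}=\max_j\|\delta_j\|_2$. A1: $g\ge0$; A2: $g$ lower semi-continuous; A3: $g(\alpha)\to+\infty$ as $\|\alpha\|\to\infty$; A4: $g(0)=0$. B1: $g=\chi_{\mathcal K}$ is the indicator of a set $\mathcal K$ ($0$ on $\mathcal K$, $+\infty$ outside); B2: there is $\kappa>0$ with $\kappa\|\alpha\|_1^2\le\|D\alpha\|_2^2$ for all $\alpha\in\mathcal K$, $D\in\mathfrak{D}$; B3: $0\in\mathcal K$; B4: $\mathfrak{D}$ convex. $\bar g(t)=\sup\{\|\alpha\|_1: g(\alpha)\le t\}$ under A1–A4, and $\bar g(t)=2\sqrt{2t/\kappa}$ under B1–B4. $L_X(\bar g)=\frac1n\sum_i\|x_i\|_2\,\bar g(\|x_i\|_2^2/2)$. *)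

theory Defs
  imports "HOL-Analysis.Analysis"
begin

text \<open>Penalties g : R^d -> R \<union> {+\<infinity>} are modelled as functions into ereal.
  Matrices in R^(m x d) are elements of real^'d^'m (rows indexed by 'm, columns by 'd);
  a data matrix X in R^(m x n) is an element of real^'n^'m, with columns x_i = column i X.\<close>

definition norm1 :: "real^'d \<Rightarrow> real" where
  "norm1 a = (\<Sum>j\<in>UNIV. \<bar>a $ j\<bar>)"

definition norm_1to2 :: "real^'d^'m \<Rightarrow> real" where
  "norm_1to2 M = Max (range (\<lambda>j. norm (column j M)))"

definition loss :: "(real^'d \<Rightarrow> ereal) \<Rightarrow> real^'m \<Rightarrow> real^'d^'m \<Rightarrow> real^'d \<Rightarrow> ereal" where
  "loss g x D a = ereal ((1/2) * (norm (x - D *v a))\<^sup>2) + g a"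

definition f_x :: "(real^'d \<Rightarrow> ereal) \<Rightarrow> real^'m \<Rightarrow> real^'d^'m \<Rightarrow> ereal" where
  "f_x g x D = (INF a. loss g x D a)"

definition F_X :: "(real^'d \<Rightarrow> ereal) \<Rightarrow> real^'n^'m \<Rightarrow> real^'d^'m \<Rightarrow> ereal" where
  "F_X g X D = ereal (1 / real CARD('n)) * (\<Sum>i\<in>UNIV. f_x g (column i X) D)"

definition lsc :: "(real^'d \<Rightarrow> ereal) \<Rightarrow> bool" where
  "lsc g \<longleftrightarrow> (\<forall>a. g a \<le> Liminf (at a) g)"

definition indicator_fun :: "(real^'d) set \<Rightarrow> real^'d \<Rightarrow> ereal" where
  "indicator_fun K a = (if a \<in> K then 0 else \<infinity>)"

definition gbarA :: "(real^'d \<Rightarrow> ereal) \<Rightarrow> real \<Rightarrow> ereal" where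
  "gbarA g t = (SUP a\<in>{a. g a \<le> ereal t}. ereal (norm1 a))"

definition gbarB :: "real \<Rightarrow> real \<Rightarrow> ereal" where
  "gbarB \<kappa> t = ereal (2 * sqrt (2 * t / \<kappa>))"

definition L_X :: "(real \<Rightarrow> ereal) \<Rightarrow> real^'n^'m \<Rightarrow> ereal" where
  "L_X gb X = ereal (1 / real CARD('n)) *
     (\<Sum>i\<in>UNIV. ereal (norm (column i X)) * gb ((norm (column i X))\<^sup>2 / 2))"

definition condA :: "(real^'d \<Rightarrow> ereal) \<Rightarrow> bool" where
  "condA g \<longleftrightarrow> (\<forall>a. g a \<ge> 0) \<and> lsc g \<and> (g \<longlongrightarrow> \<infinity>) at_infinity \<and> g 0 = 0"

definition condB :: "(real^'d \<Rightarrow> ereal) \<Rightarrow> (real^'d^'m) set \<Rightarrow> (real^'d) set \<Rightarrow> real \<Rightarrow> bool" where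
  "condB g \<D> K \<kappa> \<longleftrightarrow> g = indicator_fun K \<and> \<kappa> > 0 \<and>
     (\<forall>a\<in>K. \<forall>D\<in>\<D>. \<kappa> * (norm1 a)\<^sup>2 \<le> (norm (D *v a))\<^sup>2) \<and> 0 \<in> K \<and> convex \<D>"

end

theory Submission
  imports Defs
begin

text \<open>Fix a column \<open>x\<close> and let \<open>a\<close> be an (approximate) minimizer of the loss at \<open>D\<close>. Since
  \<open>\<onehalf>\<parallel>x - D a\<parallel>\<^sup>2 + g a \<le> f\<^sub>x D \<le> \<onehalf>\<parallel>x\<parallel>\<^sup>2\<close>, the code \<open>a\<close> has \<open>\<parallel>a\<parallel>\<^sub>1 \<le> gbar (\<parallel>x\<parallel>\<^sup>2/2)\<close>, and
  using the same code at \<open>E\<close> gives \<open>f\<^sub>x E \<le> f\<^sub>x D + \<parallel>x\<parallel> gbar(\<parallel>x\<parallel>\<^sup>2/2) \<parallel>E - D\<parallel> + O(\<parallel>E - D\<parallel>\<^sup>2)\<close>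
  with \<open>\<parallel>\<cdot>\<parallel> = \<parallel>\<cdot>\<parallel>\<^sub>1\<^sub>\<rightarrow>\<^sub>2\<close>. Summing this bound along a fine subdivision of the segment from \<open>D\<close>
  to \<open>E\<close> (which stays in \<open>\<D>\<close> by convexity) kills the quadratic remainder; averaging over the
  columns gives the theorem. Under A1--A4 the minimizer exists by lower semicontinuity and
  coercivity; under B1--B4 the restricted eigenvalue condition bounds \<open>\<parallel>a\<parallel>\<^sub>1\<close> directly.\<close>

lemma norm_column_le_norm_1to2: "norm (column j M) \<le> norm_1to2 M"
  unfolding norm_1to2_def by (rule Max_ge) auto

lemma norm_1to2_nonneg: "0 \<le> norm_1to2 M"
  using norm_column_le_norm_1to2[of _ M] norm_ge_zero order_trans by blast

lemma norm_1to2_scaleR: "norm_1to2 (c *\<^sub>R M) = \<bar>c\<bar> * norm_1to2 M"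
proof -
  have "column j (c *\<^sub>R M) = c *\<^sub>R column j M" for j
    by (simp add: column_def vec_eq_iff)
  then have "range (\<lambda>j. norm (column j (c *\<^sub>R M))) = (\<lambda>r. \<bar>c\<bar> * r) ` range (\<lambda>j. norm (column j M))"
    by (auto simp: image_image)
  moreover have "mono (\<lambda>r::real. \<bar>c\<bar> * r)" by (simp add: mono_def mult_left_mono)
  ultimately show ?thesis
    unfolding norm_1to2_def by (simp add: mono_Max_commute)
qed

lemma norm1_nonneg: "0 \<le> norm1 a"
  unfolding norm1_def by (simp add: sum_nonneg)

lemma norm1_le_card_norm: "norm1 (a::real^'d) \<le> real CARD('d) * norm a"
proof -
  have "norm1 a \<le> (\<Sum>j\<in>(UNIV::'d set). norm a)"
    unfolding norm1_def by (rule sum_mono) (rule component_le_norm_cart)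
  then show ?thesis by simp
qed

lemma norm_matrix_vector_mult_le: "norm ((M::real^'d^'m) *v a) \<le> norm1 a * norm_1to2 M"
proof -
  have "norm (M *v a) = norm (\<Sum>i\<in>UNIV. (a$i) *\<^sub>R column i M)"
    by (simp add: matrix_mult_sum scalar_mult_eq_scaleR)
  also have "\<dots> \<le> (\<Sum>i\<in>UNIV. \<bar>a$i\<bar> * norm_1to2 M)"
    by (rule order_trans[OF norm_sum sum_mono]) (simp add: mult_left_mono norm_column_le_norm_1to2)
  also have "\<dots> = norm1 a * norm_1to2 M"
    by (simp add: norm1_def sum_distrib_right)
  finally show ?thesis .
qed

text \<open>Chaining the increment bound over a uniform subdivision of \<open>[0,1]\<close> into \<open>N\<close> pieces
  accumulates the quadratic error terms only to \<open>b / N\<close>.\<close>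

lemma increment_bound_unit_interval:
  fixes \<phi> :: "real \<Rightarrow> real"
  assumes incr: "\<And>s t. s \<in> {0..1} \<Longrightarrow> t \<in> {0..1} \<Longrightarrow> \<phi> t \<le> \<phi> s + a * \<bar>t - s\<bar> + b * \<bar>t - s\<bar>\<^sup>2"
  shows "\<phi> 1 \<le> \<phi> 0 + a"
proof (rule field_le_epsilon)
  have chain: "\<phi> (real k / N) \<le> \<phi> 0 + real k * (a / N + b / N\<^sup>2)"
    if "N \<ge> 1" "k \<le> N" for N k :: nat
    using that(2)
  proof (induction k)
    case (Suc k)
    have step: "real (Suc k) / N - real k / N = 1 / N"
      using that(1) by (simp add: field_simps)
    have "real k / N \<in> {0..1}" "real (Suc k) / N \<in> {0..1}"
      using Suc.prems that(1) by (auto simp: field_simps)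
    from incr[OF this] have "\<phi> (real (Suc k) / N) \<le> \<phi> (real k / N) + a * (1 / N) + b * (1 / N)\<^sup>2"
      unfolding step by simp
    also have "\<dots> \<le> \<phi> 0 + real k * (a / N + b / N\<^sup>2) + a * (1 / N) + b * (1 / N)\<^sup>2"
      using Suc by simp
    also have "\<dots> = \<phi> 0 + real (Suc k) * (a / N + b / N\<^sup>2)"
      by (simp add: algebra_simps power2_eq_square add_divide_distrib)
    finally show ?case .
  qed simp
  fix e :: real assume e: "e > 0"
  obtain n :: nat where n: "b / e < n"
    using reals_Archimedean2 by blast
  define N where "N = Suc n"
  have "b < n * e"
    using n e by (simp add: pos_divide_less_eq)
  then have N: "N \<ge> 1" "b < N * e"
    using e by (simp_all add: N_def distrib_right)
  have "\<phi> 1 \<le> \<phi> 0 + real N * (a / N + b / N\<^sup>2)"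
    using chain[OF N(1) order_refl] N(1) by simp
  also have "\<dots> = \<phi> 0 + a + b / N"
    using N(1) by (simp add: field_simps power2_eq_square)
  also have "b / N < e"
    using N by (simp add: divide_less_eq mult.commute)
  finally show "\<phi> 1 \<le> \<phi> 0 + a + e"
    by simp
qed

lemma increment_bound_convex:
  fixes f :: "'a::real_vector \<Rightarrow> real" and N :: "'a \<Rightarrow> real"
  assumes "convex S" "x \<in> S" "y \<in> S"
    and N_scaleR: "\<And>c v. N (c *\<^sub>R v) = \<bar>c\<bar> * N v"
    and incr: "\<And>x y. x \<in> S \<Longrightarrow> y \<in> S \<Longrightarrow> f y \<le> f x + A * N (y - x) + B * (N (y - x))\<^sup>2"
  shows "f y \<le> f x + A * N (y - x)"
proof -
  define P where "P t = x + t *\<^sub>R (y - x)" for t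
  have P_in: "P t \<in> S" if "t \<in> {0..1}" for t
  proof -
    have "P t = (1 - t) *\<^sub>R x + t *\<^sub>R y" by (simp add: P_def algebra_simps)
    then show ?thesis using assms(1-3) that unfolding convex_def by auto
  qed
  have "f (P 1) \<le> f (P 0) + A * N (y - x)"
  proof (rule increment_bound_unit_interval[where b = "B * (N (y - x))\<^sup>2"])
    fix s t :: real assume "s \<in> {0..1}" "t \<in> {0..1}"
    then have "f (P t) \<le> f (P s) + A * N (P t - P s) + B * (N (P t - P s))\<^sup>2"
      by (intro incr P_in)
    moreover have "P t - P s = (t - s) *\<^sub>R (y - x)" by (simp add: P_def algebra_simps)
    ultimately show "f (P t) \<le> f (P s) + A * N (y - x) * \<bar>t - s\<bar> + B * (N (y - x))\<^sup>2 * \<bar>t - s\<bar>\<^sup>2"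
      by (simp add: N_scaleR power_mult_distrib ac_simps)
  qed
  then show ?thesis by (simp add: P_def)
qed

lemma lipschitz_on_convex_of_increment_bound:
  fixes f :: "'a::real_vector \<Rightarrow> real" and N :: "'a \<Rightarrow> real"
  assumes "convex S" "x \<in> S" "y \<in> S"
    and N_scaleR: "\<And>c v. N (c *\<^sub>R v) = \<bar>c\<bar> * N v"
    and "\<And>x y. x \<in> S \<Longrightarrow> y \<in> S \<Longrightarrow> f y \<le> f x + A * N (y - x) + B * (N (y - x))\<^sup>2"
  shows "\<bar>f x - f y\<bar> \<le> A * N (x - y)"
proof -
  have "N (y - x) = N (x - y)"
    using N_scaleR[of "-1" "x - y"] by simp
  then show ?thesis
    using increment_bound_convex[OF assms] increment_bound_convex[OF assms(1,3,2) assms(4-)]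
    by (simp add: abs_le_iff)
qed

lemma f_x_le_loss: "f_x g x D \<le> loss g x D a"
  unfolding f_x_def by (rule INF_lower) simp

lemma f_x_nonneg: "(\<And>a. 0 \<le> g a) \<Longrightarrow> 0 \<le> f_x g x D"
  unfolding f_x_def loss_def by (rule INF_greatest) simp

lemma f_x_le_half_norm_sq: "g 0 = 0 \<Longrightarrow> f_x g x D \<le> ereal ((norm x)\<^sup>2 / 2)"
  using f_x_le_loss[of g x D 0] by (simp add: loss_def)

lemma f_x_real:
  assumes "\<And>a. 0 \<le> g a" "g 0 = 0"
  shows "f_x g x D = ereal (real_of_ereal (f_x g x D))"
  using f_x_nonneg[of g x D] f_x_le_half_norm_sq[of g x D] assms
  by (cases "f_x g x D") auto

lemma near_minimizer_bounds:
  assumes "\<And>a. 0 \<le> g a" "g 0 = 0" and near: "loss g x D a \<le> f_x g x D + ereal e"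
  shows "(norm (x - D *v a))\<^sup>2 \<le> (norm x)\<^sup>2 + 2 * e"
    and "g a \<le> ereal ((norm x)\<^sup>2 / 2 + e)"
proof -
  have "f_x g x D + ereal e \<le> ereal ((norm x)\<^sup>2 / 2) + ereal e"
    by (rule add_right_mono[OF f_x_le_half_norm_sq[of g x D, OF assms(2)]])
  then have "loss g x D a \<le> ereal ((norm x)\<^sup>2 / 2 + e)"
    using near by simp
  then have sum: "ereal ((norm (x - D *v a))\<^sup>2 / 2) + g a \<le> ereal ((norm x)\<^sup>2 / 2 + e)"
    by (simp add: loss_def)
  have "ereal ((norm (x - D *v a))\<^sup>2 / 2) \<le> ereal ((norm x)\<^sup>2 / 2 + e)"
    using order_trans[OF add_increasing2[OF assms(1) order_refl] sum] .
  then show "(norm (x - D *v a))\<^sup>2 \<le> (norm x)\<^sup>2 + 2 * e"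
    by simp
  show "g a \<le> ereal ((norm x)\<^sup>2 / 2 + e)"
    using order_trans[OF add_increasing[OF _ order_refl] sum] by simp
qed

lemma loss_perturbation:
  "loss g x E a \<le> loss g x D a +
     ereal (norm (x - D *v a) * (norm1 a * norm_1to2 (E - D)) + (norm1 a * norm_1to2 (E - D))\<^sup>2 / 2)"
proof -
  define u where "u = norm (x - D *v a)"
  define v where "v = norm1 a * norm_1to2 (E - D)"
  have "x - E *v a = (x - D *v a) - (E - D) *v a"
    by (simp add: matrix_vector_mult_diff_rdistrib)
  then have "norm (x - E *v a) \<le> u + norm ((E - D) *v a)"
    unfolding u_def by (metis norm_triangle_ineq4)
  also have "norm ((E - D) *v a) \<le> v"
    unfolding v_def by (rule norm_matrix_vector_mult_le)
  finally have "(norm (x - E *v a))\<^sup>2 \<le> (u + v)\<^sup>2"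
    by (intro power_mono) auto
  then have "ereal (1/2 * (norm (x - E *v a))\<^sup>2) \<le> ereal (1/2 * u\<^sup>2) + ereal (u * v + v\<^sup>2 / 2)"
    by (simp add: power2_eq_square algebra_simps)
  then have "ereal (1/2 * (norm (x - E *v a))\<^sup>2) + g a \<le> (ereal (1/2 * u\<^sup>2) + ereal (u * v + v\<^sup>2 / 2)) + g a"
    by (rule add_right_mono)
  also have "\<dots> = ereal (1/2 * u\<^sup>2) + g a + ereal (u * v + v\<^sup>2 / 2)"
    by (simp add: ac_simps)
  finally show ?thesis
    unfolding loss_def u_def v_def .
qed

lemma f_x_increment_bound:
  fixes c :: "real \<Rightarrow> real"
  assumes g: "\<And>a. 0 \<le> g a" "g 0 = 0"
    and near: "\<And>e. e > 0 \<Longrightarrow> \<exists>a. loss g x D a \<le> f_x g x D + ereal e \<and> norm1 a \<le> c e"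
    and c: "(c \<longlongrightarrow> c0) (at_right 0)"
  shows "real_of_ereal (f_x g x E) \<le> real_of_ereal (f_x g x D)
           + norm x * c0 * norm_1to2 (E - D) + c0\<^sup>2 / 2 * (norm_1to2 (E - D))\<^sup>2"
proof -
  define k where "k = norm_1to2 (E - D)"
  define s where "s e = sqrt ((norm x)\<^sup>2 + 2 * e)" for e
  define h where "h e = real_of_ereal (f_x g x D) + e + s e * (c e * k) + (c e * k)\<^sup>2 / 2" for e
  have bound: "real_of_ereal (f_x g x E) \<le> h e" if "e > 0" for e
  proof -
    obtain a where a: "loss g x D a \<le> f_x g x D + ereal e" "norm1 a \<le> c e"
      using near[OF \<open>e > 0\<close>] by blast
    define u where "u = norm (x - D *v a)"
    define v where "v = norm1 a * k"
    have u: "u \<le> s e"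
      unfolding u_def s_def by (rule real_le_rsqrt[OF near_minimizer_bounds(1)[OF g a(1)]])
    have v: "0 \<le> v" "v \<le> c e * k"
      unfolding v_def k_def using mult_right_mono[OF a(2) norm_1to2_nonneg]
      by (simp_all add: norm1_nonneg norm_1to2_nonneg)
    have "f_x g x E \<le> loss g x E a"
      by (rule f_x_le_loss)
    also have "\<dots> \<le> loss g x D a + ereal (u * v + v\<^sup>2 / 2)"
      unfolding u_def v_def k_def by (rule loss_perturbation)
    also have "\<dots> \<le> f_x g x D + ereal e + ereal (u * v + v\<^sup>2 / 2)"
      by (rule add_right_mono[OF a(1)])
    finally have "real_of_ereal (f_x g x E) \<le> real_of_ereal (f_x g x D) + e + (u * v + v\<^sup>2 / 2)"
      using f_x_real[of g x D, OF g] f_x_real[of g x E, OF g] by (metis ereal_less_eq(3) plus_ereal.simps(1))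
    moreover have "u * v \<le> s e * (c e * k)"
      using u v \<open>e > 0\<close> by (intro mult_mono) (auto simp: u_def s_def)
    moreover have "v\<^sup>2 \<le> (c e * k)\<^sup>2"
      using v by (intro power_mono)
    ultimately show ?thesis
      unfolding h_def by linarith
  qed
  have "(s \<longlongrightarrow> sqrt ((norm x)\<^sup>2 + 2 * 0)) (at_right 0)"
    unfolding s_def by (intro tendsto_intros)
  then have "(s \<longlongrightarrow> norm x) (at_right 0)"
    by simp
  then have "(h \<longlongrightarrow> real_of_ereal (f_x g x D) + 0 + norm x * (c0 * k) + (c0 * k)\<^sup>2 / 2) (at_right 0)"
    unfolding h_def by (intro tendsto_intros c tendsto_ident_at) auto
  then have "real_of_ereal (f_x g x E) \<le> real_of_ereal (f_x g x D) + 0 + norm x * (c0 * k) + (c0 * k)\<^sup>2 / 2"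
    by (rule tendsto_lowerbound) (auto intro: eventually_mono[OF eventually_at_right_less] bound)
  then show ?thesis
    unfolding k_def by (simp add: power_mult_distrib ac_simps)
qed

lemma f_x_near_minimizer:
  assumes "\<And>a. 0 \<le> g a" "g 0 = 0" "e > 0"
  shows "\<exists>a. loss g x D a < f_x g x D + ereal e"
proof -
  obtain m where "f_x g x D = ereal m"
    using f_x_real[of g x D, OF assms(1,2)] by blast
  then have "f_x g x D < f_x g x D + ereal e"
    using \<open>e > 0\<close> by simp
  then show ?thesis
    unfolding f_x_def[of g x D] INF_less_iff by blast
qed

lemma lsc_tendsto_le:
  fixes g :: "real^'d \<Rightarrow> ereal"
  assumes "lsc g" "\<beta> \<longlonglongrightarrow> a" "(\<lambda>n. g (\<beta> n)) \<longlonglongrightarrow> L"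
  shows "g a \<le> L"
proof (rule ccontr)
  assume "\<not> g a \<le> L"
  then obtain y where y: "L < y" "y < g a"
    using dense[of L "g a"] by (auto simp: not_le)
  have "eventually (\<lambda>b. y < g b) (at a)"
    using assms(1) y(2) unfolding lsc_def le_Liminf_iff by blast
  then have "eventually (\<lambda>b. b \<noteq> a \<longrightarrow> y < g b) (nhds a)"
    by (simp add: eventually_at_filter)
  then have "eventually (\<lambda>b. y < g b) (nhds a)"
    by (rule eventually_mono) (use y(2) in blast)
  then have "eventually (\<lambda>n. y < g (\<beta> n)) sequentially"
    using assms(2) by (rule eventually_compose_filterlim)
  moreover have "eventually (\<lambda>n. g (\<beta> n) < y) sequentially"
    using assms(3) y(1) by (rule order_tendstoD)
  ultimately have "eventually (\<lambda>n. False) sequentially"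
    by eventually_elim auto
  then show False by simp
qed

lemma condA_sublevel_norm_bound:
  assumes "condA g"
  shows "\<exists>R. \<forall>a. g a \<le> ereal t \<longrightarrow> norm a < R"
proof -
  have "(g \<longlongrightarrow> \<infinity>) at_infinity"
    using assms unfolding condA_def by blast
  then have "eventually (\<lambda>a. ereal t < g a) at_infinity"
    unfolding tendsto_PInfty by blast
  then obtain R where "\<And>a. R \<le> norm a \<Longrightarrow> ereal t < g a"
    unfolding eventually_at_infinity by auto
  then have "g a \<le> ereal t \<Longrightarrow> norm a < R" for a
    by (meson leD not_le)
  then show ?thesis
    by blast
qed

lemma loss_lsc_sequentially:
  assumes "lsc g" "\<beta> \<longlonglongrightarrow> a" and \<gamma>: "\<And>n. g (\<beta> n) = ereal (\<gamma> n)"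
    and lim: "(\<lambda>n. 1/2 * (norm (x - D *v \<beta> n))\<^sup>2 + \<gamma> n) \<longlonglongrightarrow> L"
  shows "loss g x D a \<le> ereal L"
proof -
  define q where "q b = 1/2 * (norm (x - D *v b))\<^sup>2" for b
  have "isCont q a"
    unfolding q_def by (intro continuous_intros) (simp add: linear_continuous_at linear_matrix_vector_mul_eq)
  then have "(\<lambda>n. q (\<beta> n)) \<longlonglongrightarrow> q a"
    using \<open>\<beta> \<longlonglongrightarrow> a\<close> by (rule isCont_tendsto_compose)
  with lim have "(\<lambda>n. (q (\<beta> n) + \<gamma> n) - q (\<beta> n)) \<longlonglongrightarrow> L - q a"
    unfolding q_def by (rule tendsto_diff)
  then have "(\<lambda>n. g (\<beta> n)) \<longlonglongrightarrow> ereal (L - q a)"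
    by (simp add: \<gamma>)
  with \<open>lsc g\<close> \<open>\<beta> \<longlonglongrightarrow> a\<close> have "g a \<le> ereal (L - q a)"
    by (rule lsc_tendsto_le)
  then have "loss g x D a \<le> ereal (q a) + ereal (L - q a)"
    unfolding loss_def q_def by (rule add_left_mono)
  then show ?thesis
    by simp
qed

text \<open>The direct method: a minimizing sequence stays in a sublevel set of \<open>g\<close>, hence is bounded
  by coercivity, and a convergent subsequence has a minimizer as its limit.\<close>

lemma condA_minimizer:
  assumes A: "condA g"
  shows "\<exists>a. loss g x D a = f_x g x D"
proof -
  have g: "\<And>a. 0 \<le> g a" "g 0 = 0" and "lsc g"
    using A unfolding condA_def by auto
  define m where "m = real_of_ereal (f_x g x D)"
  have m: "f_x g x D = ereal m"
    unfolding m_def by (rule f_x_real[of g x D, OF g])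
  have "\<forall>n. \<exists>a. loss g x D a < f_x g x D + ereal (1 / Suc n)"
    by (intro allI f_x_near_minimizer[where g=g, OF g]) simp
  then obtain \<alpha> where \<alpha>: "\<And>n. loss g x D (\<alpha> n) < f_x g x D + ereal (1 / Suc n)"
    by metis
  have g_\<alpha>: "g (\<alpha> n) \<le> ereal ((norm x)\<^sup>2 / 2 + 1)" for n
  proof -
    have "g (\<alpha> n) \<le> ereal ((norm x)\<^sup>2 / 2 + 1 / Suc n)"
      using near_minimizer_bounds(2)[OF g less_imp_le[OF \<alpha>]] .
    also have "\<dots> \<le> ereal ((norm x)\<^sup>2 / 2 + 1)"
      by simp
    finally show ?thesis .
  qed
  define \<gamma> where "\<gamma> n = real_of_ereal (g (\<alpha> n))" for n
  have \<gamma>: "g (\<alpha> n) = ereal (\<gamma> n)" for n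
    using g(1)[of "\<alpha> n"] g_\<alpha>[of n] unfolding \<gamma>_def by (cases "g (\<alpha> n)") auto
  define l where "l n = 1/2 * (norm (x - D *v \<alpha> n))\<^sup>2 + \<gamma> n" for n
  have loss_\<alpha>: "loss g x D (\<alpha> n) = ereal (l n)" for n
    by (simp add: loss_def l_def \<gamma>)
  have "l \<longlonglongrightarrow> m"
  proof (rule real_tendsto_sandwich)
    show "\<forall>\<^sub>F n in sequentially. m \<le> l n"
      using f_x_le_loss[of g x D "\<alpha> _"] by (simp add: m loss_\<alpha>)
    show "\<forall>\<^sub>F n in sequentially. l n \<le> m + 1 / Suc n"
      using \<alpha> by (simp add: m loss_\<alpha> less_imp_le)
    show "(\<lambda>n. m + 1 / Suc n) \<longlonglongrightarrow> m"
      using tendsto_add[OF tendsto_const LIMSEQ_Suc[OF lim_const_over_n[of 1]]] by simp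
  qed simp
  obtain R where "\<And>n. norm (\<alpha> n) < R"
    using condA_sublevel_norm_bound[OF A] g_\<alpha> by blast
  then have "bounded (range \<alpha>)"
    unfolding bounded_iff by (auto intro: less_imp_le)
  then obtain a r where r: "strict_mono r" "(\<alpha> \<circ> r) \<longlonglongrightarrow> a"
    using bounded_imp_convergent_subsequence by blast
  have "loss g x D a \<le> f_x g x D"
    unfolding m using \<open>lsc g\<close> r(2)
  proof (rule loss_lsc_sequentially)
    show "(\<lambda>n. 1/2 * (norm (x - D *v (\<alpha> \<circ> r) n))\<^sup>2 + \<gamma> (r n)) \<longlonglongrightarrow> m"
      using LIMSEQ_subseq_LIMSEQ[OF \<open>l \<longlonglongrightarrow> m\<close> r(1)] by (simp add: l_def comp_def)
  qed (simp add: \<gamma>)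
  with f_x_le_loss show ?thesis
    by (blast intro: antisym)
qed

lemma gbarA_finite:
  assumes A: "condA g" and "0 \<le> t"
  shows "\<exists>c. gbarA g t = ereal c"
proof -
  obtain R where R: "\<And>a. g a \<le> ereal t \<Longrightarrow> norm a < R"
    using condA_sublevel_norm_bound[OF A] by blast
  have "gbarA g t \<le> ereal (real CARD('a) * R)"
    unfolding gbarA_def
  proof (rule SUP_least)
    fix a :: "real^'a" assume "a \<in> {a. g a \<le> ereal t}"
    then have "real CARD('a) * norm a \<le> real CARD('a) * R"
      using R by (intro mult_left_mono) (auto intro: less_imp_le)
    with norm1_le_card_norm[of a] have "norm1 a \<le> real CARD('a) * R"
      by linarith
    then show "ereal (norm1 a) \<le> ereal (real CARD('a) * R)"
      by simp
  qed
  moreover have "ereal (norm1 (0::real^'a)) \<le> gbarA g t"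
    unfolding gbarA_def using A \<open>0 \<le> t\<close> by (intro SUP_upper) (simp add: condA_def)
  ultimately show ?thesis
    by (cases "gbarA g t") (auto simp: norm1_def)
qed

lemma condA_near_minimizer:
  assumes A: "condA g" and c: "gbarA g ((norm x)\<^sup>2 / 2) = ereal c" and "e > 0"
  shows "\<exists>a. loss g x D a \<le> f_x g x D + ereal e \<and> norm1 a \<le> c"
proof -
  have g: "\<And>a. 0 \<le> g a" "g 0 = 0"
    using A unfolding condA_def by auto
  obtain a where a: "loss g x D a = f_x g x D"
    using condA_minimizer[OF A] by blast
  then have "g a \<le> ereal ((norm x)\<^sup>2 / 2 + 0)"
    by (intro near_minimizer_bounds(2)[where g=g and D=D, OF g]) simp
  then have "ereal (norm1 a) \<le> gbarA g ((norm x)\<^sup>2 / 2)"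
    unfolding gbarA_def by (intro SUP_upper) simp
  moreover have "loss g x D a \<le> f_x g x D + ereal e"
    using a \<open>e > 0\<close> by (simp add: ereal_le_add_self)
  ultimately show ?thesis
    using c by auto
qed

text \<open>Under B1--B4 the infimum need not be attained, but every \<open>e\<close>-minimizer \<open>a\<close> lies in \<open>K\<close>, so
  \<open>\<surd>\<kappa> \<parallel>a\<parallel>\<^sub>1 \<le> \<parallel>D a\<parallel> \<le> \<parallel>x\<parallel> + \<parallel>x - D a\<parallel>\<close>.\<close>

lemma condB_near_minimizer:
  assumes B: "condB g \<D> K \<kappa>" and "D \<in> \<D>" and "e > 0"
  shows "\<exists>a. loss g x D a \<le> f_x g x D + ereal e
              \<and> norm1 a \<le> (norm x + sqrt ((norm x)\<^sup>2 + 2 * e)) / sqrt \<kappa>"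
proof -
  have gK: "g = indicator_fun K" and "\<kappa> > 0" and "0 \<in> K"
    and kappa: "\<And>a. a \<in> K \<Longrightarrow> \<kappa> * (norm1 a)\<^sup>2 \<le> (norm (D *v a))\<^sup>2"
    using B \<open>D \<in> \<D>\<close> unfolding condB_def by auto
  have g: "\<And>a. 0 \<le> g a" "g 0 = 0"
    using \<open>0 \<in> K\<close> unfolding gK indicator_fun_def by auto
  obtain a where a: "loss g x D a < f_x g x D + ereal e"
    using f_x_near_minimizer[where g=g, OF g \<open>e > 0\<close>] by blast
  have "loss g x D a \<noteq> \<infinity>"
    using a by auto
  then have "a \<in> K"
    by (auto simp: loss_def gK indicator_fun_def split: if_splits)
  have "sqrt \<kappa> * norm1 a = sqrt (\<kappa> * (norm1 a)\<^sup>2)"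
    using \<open>\<kappa> > 0\<close> by (simp add: real_sqrt_mult norm1_nonneg)
  also have "\<dots> \<le> norm (D *v a)"
    using real_sqrt_le_mono[OF kappa[OF \<open>a \<in> K\<close>]] by simp
  also have "\<dots> \<le> norm x + norm (x - D *v a)"
    using norm_triangle_ineq4[of x "x - D *v a"] by simp
  also have "norm (x - D *v a) \<le> sqrt ((norm x)\<^sup>2 + 2 * e)"
    using near_minimizer_bounds(1)[where g=g, OF g less_imp_le[OF a]] by (rule real_le_rsqrt)
  finally have "norm1 a \<le> (norm x + sqrt ((norm x)\<^sup>2 + 2 * e)) / sqrt \<kappa>"
    using \<open>\<kappa> > 0\<close> by (simp add: pos_le_divide_eq mult.commute)
  with a show ?thesis
    by (auto intro: less_imp_le)
qed

lemma f_x_lipschitz_on: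
  fixes c :: "real \<Rightarrow> real"
  assumes g: "\<And>a. 0 \<le> g a" "g 0 = 0"
    and "convex S" "D \<in> S" "D' \<in> S"
    and near: "\<And>D e. D \<in> S \<Longrightarrow> e > 0 \<Longrightarrow> \<exists>a. loss g x D a \<le> f_x g x D + ereal e \<and> norm1 a \<le> c e"
    and "(c \<longlongrightarrow> c0) (at_right 0)"
  shows "\<bar>real_of_ereal (f_x g x D) - real_of_ereal (f_x g x D')\<bar> \<le> norm x * c0 * norm_1to2 (D - D')"
proof (rule lipschitz_on_convex_of_increment_bound[OF assms(3-5) norm_1to2_scaleR])
  fix D E assume "D \<in> S"
  then show "real_of_ereal (f_x g x E) \<le> real_of_ereal (f_x g x D)
      + norm x * c0 * norm_1to2 (E - D) + c0\<^sup>2 / 2 * (norm_1to2 (E - D))\<^sup>2"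
    using f_x_increment_bound[where g=g, OF g near assms(7)] by blast
qed

lemma f_x_lipschitz_condA:
  assumes A: "condA g" and c: "gbarA g ((norm x)\<^sup>2 / 2) = ereal c"
  shows "\<bar>real_of_ereal (f_x g x D) - real_of_ereal (f_x g x D')\<bar> \<le> norm x * c * norm_1to2 (D - D')"
proof -
  have g: "\<And>a. 0 \<le> g a" "g 0 = 0"
    using A unfolding condA_def by auto
  show ?thesis
    using condA_near_minimizer[OF A c]
    by (intro f_x_lipschitz_on[where g=g and S=UNIV and c="\<lambda>_. c", OF g]) auto
qed

lemma f_x_lipschitz_condB:
  assumes B: "condB g \<D> K \<kappa>" and "D \<in> \<D>" "D' \<in> \<D>"
  shows "\<bar>real_of_ereal (f_x g x D) - real_of_ereal (f_x g x D')\<bar>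
           \<le> norm x * (2 * norm x / sqrt \<kappa>) * norm_1to2 (D - D')"
proof -
  have g: "\<And>a. 0 \<le> g a" "g 0 = 0" and "convex \<D>" and "\<kappa> > 0"
    using B unfolding condB_def indicator_fun_def by auto
  have "((\<lambda>e. (norm x + sqrt ((norm x)\<^sup>2 + 2 * e)) / sqrt \<kappa>)
          \<longlongrightarrow> (norm x + sqrt ((norm x)\<^sup>2 + 2 * 0)) / sqrt \<kappa>) (at_right 0)"
    using \<open>\<kappa> > 0\<close> by (intro tendsto_intros) auto
  then have "((\<lambda>e. (norm x + sqrt ((norm x)\<^sup>2 + 2 * e)) / sqrt \<kappa>)
          \<longlongrightarrow> 2 * norm x / sqrt \<kappa>) (at_right 0)"
    by simp
  with condB_near_minimizer[OF B] \<open>convex \<D>\<close> assms(2,3) show ?thesis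
    by (intro f_x_lipschitz_on[where g=g and S=\<D>, OF g]) auto
qed

lemma F_X_lipschitz_of_columns:
  fixes X :: "real^'n^'m" and g :: "real^'d \<Rightarrow> ereal" and D D' :: "real^'d^'m"
  assumes g: "\<And>a. 0 \<le> g a" "g 0 = 0"
    and gb: "\<And>i. gb ((norm (column i X))\<^sup>2 / 2) = ereal (c i)"
    and lip: "\<And>i. \<bar>real_of_ereal (f_x g (column i X) D) - real_of_ereal (f_x g (column i X) D')\<bar>
                  \<le> norm (column i X) * c i * norm_1to2 (D - D')"
  shows "\<bar>F_X g X D - F_X g X D'\<bar> \<le> L_X gb X * ereal (norm_1to2 (D - D'))"
proof -
  define fr where "fr i E = real_of_ereal (f_x g (column i X) E)" for i E
  define n where "n = real CARD('n)"
  have F: "F_X g X E = ereal (1 / n * (\<Sum>i\<in>UNIV. fr i E))" for E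
    unfolding F_X_def fr_def n_def by (subst f_x_real[where g=g, OF g]) simp
  have L: "L_X gb X = ereal (1 / n * (\<Sum>i\<in>UNIV. norm (column i X) * c i))"
    unfolding L_X_def gb n_def by simp
  have "\<bar>1 / n * (\<Sum>i\<in>UNIV. fr i D) - 1 / n * (\<Sum>i\<in>UNIV. fr i D')\<bar>
        = 1 / n * \<bar>\<Sum>i\<in>UNIV. fr i D - fr i D'\<bar>"
    by (simp add: n_def sum_subtractf diff_divide_distrib[symmetric])
  also have "\<dots> \<le> 1 / n * (\<Sum>i\<in>UNIV. norm (column i X) * c i * norm_1to2 (D - D'))"
    by (intro mult_left_mono order_trans[OF sum_abs sum_mono]) (auto simp: n_def fr_def lip)
  also have "\<dots> = 1 / n * (\<Sum>i\<in>UNIV. norm (column i X) * c i) * norm_1to2 (D - D')"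
    by (simp add: sum_distrib_right)
  finally show ?thesis
    unfolding F L by simp
qed

theorem mainTheorem9:
  fixes g :: "real^'d \<Rightarrow> ereal" and \<D> :: "(real^'d^'m) set"
    and X :: "real^'n^'m" and D D' :: "real^'d^'m"
  assumes "condA g \<or> (\<exists>K \<kappa>. condB g \<D> K \<kappa>)"
    and "D \<in> \<D>" and "D' \<in> \<D>"
  shows "(condA g \<longrightarrow>
            \<bar>F_X g X D - F_X g X D'\<bar> \<le> L_X (gbarA g) X * ereal (norm_1to2 (D - D')))
       \<and> (\<forall>K \<kappa>. condB g \<D> K \<kappa> \<longrightarrow>
            \<bar>F_X g X D - F_X g X D'\<bar> \<le> L_X (gbarB \<kappa>) X * ereal (norm_1to2 (D - D')))"
proof (intro conjI impI allI)
  assume A: "condA g"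
  then have g: "\<And>a. 0 \<le> g a" "g 0 = 0"
    unfolding condA_def by auto
  define c where "c i = real_of_ereal (gbarA g ((norm (column i X))\<^sup>2 / 2))" for i
  have c: "gbarA g ((norm (column i X))\<^sup>2 / 2) = ereal (c i)" for i
    using gbarA_finite[OF A, of "(norm (column i X))\<^sup>2 / 2"] unfolding c_def by auto
  show "\<bar>F_X g X D - F_X g X D'\<bar> \<le> L_X (gbarA g) X * ereal (norm_1to2 (D - D'))"
    by (rule F_X_lipschitz_of_columns[where g=g and gb="gbarA g", OF g c f_x_lipschitz_condA[OF A c]])
next
  fix K \<kappa> assume B: "condB g \<D> K \<kappa>"
  then have g: "\<And>a. 0 \<le> g a" "g 0 = 0"
    unfolding condB_def indicator_fun_def by auto
  have "gbarB \<kappa> ((norm x)\<^sup>2 / 2) = ereal (2 * norm x / sqrt \<kappa>)" for x :: "real^'m"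
    by (simp add: gbarB_def real_sqrt_divide)
  with f_x_lipschitz_condB[OF B assms(2,3)]
  show "\<bar>F_X g X D - F_X g X D'\<bar> \<le> L_X (gbarB \<kappa>) X * ereal (norm_1to2 (D - D'))"
    by (intro F_X_lipschitz_of_columns[where g=g and gb="gbarB \<kappa>", OF g]) auto
qed

end
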